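(* Let $V\in\mathcal{V}$ and $\epsilon,c,c_1,c_2\in(0,\mathcal{L}_V(0))$. (1) $\mathcal{L}_V(\tau_V(c))\ge c/(1+c)$, and for all $s>0$, \[\mathcal{L}_V(\tau_V(c)+s)\le c+\frac{\tau_V(c)+s}{s\,e^{s\lambda_V(c)}}.\] (2) $\mathcal{L}_V(T_V(\epsilon))=\epsilon$, and for all $r\ge0$, $s>0$ and $c_1<c_2$, \[\mathcal{L}_V(T_V(\epsilon)+r+s)\le c_1+c_2e^{-(T_V(\epsilon)+r+s)\lambda_V(c_1)}+\frac{\epsilon\,(T_V(\epsilon)+r+s)}{(T_V(\epsilon)+s)e^{r\lambda_V(c_2)}}.\]
   Context: $\mathcal{V}$ is the class of non-decreasing right-continuous $V:(0,\infty)\to\mathbb{R}$ with $\lim_{\lambda\to0^+}V(\lambda)=0$, $\lim_{\lambda\to\infty}V(\lambda)<\infty$; $\mathcal{L}_V(t)=\int_{(0,\infty)}e^{-t\lambda}dV(\lambda)$ for $t\ge0$. $T_V(\epsilon)=\min\{t\ge0:\mathcal{L}_V(t)\le\epsilon\}$. For $c\in(0,\mathcal{L}_V(0))$: $\lambda_V(c)=\inf\{\lambda:V(\lambda)>c\}$, $\tau_V(c)=\sup_{\lambda\ge\lambda_V(c)}\lambda^{-1}\log(1+V(\lambda))$. *)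

theory Defs
  imports "HOL-Probability.Probability"
begin

definition Vclass :: "(real \<Rightarrow> real) \<Rightarrow> bool" where
  "Vclass V \<longleftrightarrow> mono_on {0<..} V
     \<and> (\<forall>x>0. continuous (at_right x) V)
     \<and> (V \<longlongrightarrow> 0) (at_right 0)
     \<and> (\<exists>L. (V \<longlongrightarrow> L) at_top)"

text \<open>Extension of V by 0 to (-inf,0], so that it is the distribution function
  of the Lebesgue-Stieltjes measure dV on the real line (carried by (0,inf)).\<close>
definition Vext :: "(real \<Rightarrow> real) \<Rightarrow> real \<Rightarrow> real" where
  "Vext V x = (if x \<le> 0 then 0 else V x)"

definition LV :: "(real \<Rightarrow> real) \<Rightarrow> real \<Rightarrow> real" where
  "LV V t = (LINT l:{0<..}|interval_measure (Vext V). exp (- t * l))"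

definition TV :: "(real \<Rightarrow> real) \<Rightarrow> real \<Rightarrow> real" where
  "TV V \<epsilon> = (LEAST t. t \<ge> 0 \<and> LV V t \<le> \<epsilon>)"

definition lamV :: "(real \<Rightarrow> real) \<Rightarrow> real \<Rightarrow> real" where
  "lamV V c = Inf {l. l > 0 \<and> V l > c}"

definition tauV :: "(real \<Rightarrow> real) \<Rightarrow> real \<Rightarrow> real" where
  "tauV V c = (SUP l \<in> {l. l > 0 \<and> l \<ge> lamV V c}. ln (1 + V l) / l)"

end

theory Submission
  imports Defs "HOL-Real_Asymp.Real_Asymp"
begin

(* Split the Laplace transform of dV at lamV V c.  Below that point V stays at most c, so by
   left-continuity of measures dV puts mass at most c there.  Above it V x <= exp (tauV V c * x)
   by the definition of tauV, and exchanging the order of integration against t exp (-t u) du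
   turns this growth bound into the tail estimate (t + s) / (s exp (s lamV V c)).  The lower bound
   c / (1 + c) comes from LV V t >= exp (-t x) V x at points x where ln (1 + V x) / x is close to
   tauV V c.  LV V is continuous and decreases to 0, so TV V eps is the first time it reaches eps;
   for (2) the mass between lamV V c1 and lamV V c2 is at most c2, and the rest is compared with
   LV V (TV V eps + s) <= eps using exp (-(t + r) x) <= exp (-r lamV V c2) exp (-t x). *)

lemma nn_integral_exp_neg_atLeast:
  fixes t k a :: real
  assumes "0 < t" "0 \<le> k"
  shows "(\<integral>\<^sup>+u. ennreal (k * t * exp (- t * u)) * indicator {a..} u \<partial>lborel)
    = ennreal (k * exp (- t * a))"
proof -
  have "(\<integral>\<^sup>+u. ennreal (k * t * exp (- t * u)) * indicator {a..} u \<partial>lborel) = 0 - (- k * exp (- t * a))"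
  proof (rule nn_integral_FTC_atLeast)
    fix x show "((\<lambda>u. - k * exp (- t * u)) has_real_derivative k * t * exp (- t * x)) (at x)"
      by (auto intro!: derivative_eq_intros)
    show "0 \<le> k * t * exp (- t * x)"
      using assms by simp
    show "((\<lambda>u. - k * exp (- t * u)) \<longlongrightarrow> 0) at_top"
      using assms by real_asymp
  qed simp
  then show ?thesis
    by simp
qed

context finite_borel_measure
begin

lemma integrable_indicator_exp_neg:
  assumes "A \<in> sets borel" "A \<subseteq> {a..}" "0 \<le> t"
  shows "integrable M (\<lambda>x. indicator A x * exp (- t * x))"
proof (rule integrable_const_bound[where B = "exp (- t * a)"])
  show "AE x in M. norm (indicator A x * exp (- t * x)) \<le> exp (- t * a)"
    using assms by (intro AE_I2) (auto simp: indicator_def mult_left_mono)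
  show "(\<lambda>x. indicator A x * exp (- t * x)) \<in> borel_measurable M"
    using assms(1) M_is_borel by measurable
qed

lemma integral_indicator_exp_neg_Un:
  assumes "A \<in> sets borel" "B \<in> sets borel" "A \<inter> B = {}" "A \<union> B \<subseteq> {a..}" "0 \<le> t"
  shows "(\<integral>x. indicator (A \<union> B) x * exp (- t * x) \<partial>M)
    = (\<integral>x. indicator A x * exp (- t * x) \<partial>M) + (\<integral>x. indicator B x * exp (- t * x) \<partial>M)"
  using assms unfolding indicator_disj_union[OF assms(3)] distrib_right
  by (intro Bochner_Integration.integral_add integrable_indicator_exp_neg) auto

lemma integral_indicator_exp_neg_le:
  assumes "A \<in> sets borel" "A \<subseteq> {a..}" "0 \<le> t"
  shows "(\<integral>x. indicator A x * exp (- t * x) \<partial>M) \<le> exp (- t * a) * measure M A"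
proof -
  have "(\<integral>x. indicator A x * exp (- t * x) \<partial>M) \<le> (\<integral>x. exp (- t * a) * indicator A x \<partial>M)"
  proof (rule integral_mono)
    show "integrable M (\<lambda>x. indicator A x * exp (- t * x))"
      using assms by (rule integrable_indicator_exp_neg)
    show "integrable M (\<lambda>x. exp (- t * a) * indicator A x)"
      using assms(1) by (intro integrable_mult_right integrable_real_indicator)
        (auto simp: less_top[symmetric])
    show "indicator A x * exp (- t * x) \<le> exp (- t * a) * indicator A x" for x
      using assms by (auto simp: indicator_def mult_left_mono)
  qed
  then show ?thesis
    using assms(1) by (simp add: borel_UNIV)
qed

lemma measure_lessThan_le:
  assumes "\<forall>\<^sub>F x in at_left a. cdf M x \<le> c"
  shows "measure M {..<a} \<le> c"
  using cdf_at_left assms by (rule tendsto_upperbound) simp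

lemma nn_integral_exp_neg_eq_measure_Icc:
  assumes "0 < t"
  shows "(\<integral>\<^sup>+x. ennreal (indicator {a..} x * exp (- t * x)) \<partial>M)
    = (\<integral>\<^sup>+u. ennreal (t * exp (- t * u)) * emeasure M {a..u} \<partial>lborel)"
proof -
  interpret pair_sigma_finite M "lborel :: real measure" ..
  note [measurable_cong] = M_is_borel
  define G where "G x u = (if a \<le> x \<and> x \<le> u then t * exp (- t * u) else 0)" for x u :: real
  have "(\<integral>\<^sup>+x. ennreal (indicator {a..} x * exp (- t * x)) \<partial>M)
      = (\<integral>\<^sup>+x. (\<integral>\<^sup>+u. ennreal (G x u) \<partial>lborel) \<partial>M)"
  proof (intro nn_integral_cong)
    fix x :: real
    have "(\<integral>\<^sup>+u. ennreal (G x u) \<partial>lborel)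
        = indicator {a..} x * (\<integral>\<^sup>+u. ennreal (1 * t * exp (- t * u)) * indicator {x..} u \<partial>lborel)"
      by (cases "a \<le> x") (auto simp: G_def indicator_def intro!: nn_integral_cong)
    then show "ennreal (indicator {a..} x * exp (- t * x)) = (\<integral>\<^sup>+u. ennreal (G x u) \<partial>lborel)"
      using nn_integral_exp_neg_atLeast[OF assms, of 1 x] by (simp add: indicator_def)
  qed
  also have "\<dots> = (\<integral>\<^sup>+u. (\<integral>\<^sup>+x. ennreal (G x u) \<partial>M) \<partial>lborel)"
    by (rule Fubini'[symmetric]) (unfold G_def, measurable)
  also have "\<dots> = (\<integral>\<^sup>+u. ennreal (t * exp (- t * u)) * emeasure M {a..u} \<partial>lborel)"
    by (intro nn_integral_cong, subst nn_integral_cmult_indicator[symmetric])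
       (auto simp: G_def indicator_def intro!: nn_integral_cong)
  finally show ?thesis .
qed

lemma integral_exp_tail_le:
  assumes "0 < s" "0 \<le> \<tau>" "\<And>u. a \<le> u \<Longrightarrow> cdf M u \<le> exp (\<tau> * u)"
  shows "(\<integral>x. indicator {a..} x * exp (- (\<tau> + s) * x) \<partial>M) \<le> (\<tau> + s) / (s * exp (s * a))"
proof -
  define t where "t = \<tau> + s"
  have t: "0 < t"
    using assms unfolding t_def by simp
  have "ennreal (\<integral>x. indicator {a..} x * exp (- t * x) \<partial>M)
      = (\<integral>\<^sup>+u. ennreal (t * exp (- t * u)) * emeasure M {a..u} \<partial>lborel)"
    unfolding nn_integral_exp_neg_eq_measure_Icc[OF t, symmetric]
    using t by (intro nn_integral_eq_integral[symmetric] integrable_indicator_exp_neg AE_I2) auto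
  also have "\<dots> \<le> (\<integral>\<^sup>+u. ennreal (t * exp (- s * u)) * indicator {a..} u \<partial>lborel)"
  proof (intro nn_integral_mono)
    fix u :: real
    have "exp (- t * u) * exp (\<tau> * u) = exp (- s * u)"
      by (simp add: t_def exp_add[symmetric] algebra_simps)
    then have exponent: "t * exp (- t * u) * exp (\<tau> * u) = t * exp (- s * u)"
      by (simp add: mult.assoc)
    have "emeasure M {a..u} \<le> ennreal (exp (\<tau> * u)) * indicator {a..} u"
    proof (cases "a \<le> u")
      case True
      have "emeasure M {a..u} \<le> emeasure M {..u}"
        by (intro emeasure_mono) auto
      then show ?thesis
        using assms(3)[OF True] True by (simp add: emeasure_eq_measure cdf_def ennreal_leI)
    qed simp
    then have "ennreal (t * exp (- t * u)) * emeasure M {a..u}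
        \<le> ennreal (t * exp (- t * u)) * ennreal (exp (\<tau> * u)) * indicator {a..} u"
      by (simp add: mult.assoc mult_left_mono)
    also have "ennreal (t * exp (- t * u)) * ennreal (exp (\<tau> * u)) = ennreal (t * exp (- s * u))"
      using t exponent by (subst ennreal_mult[symmetric]) auto
    finally show "ennreal (t * exp (- t * u)) * emeasure M {a..u}
        \<le> ennreal (t * exp (- s * u)) * indicator {a..} u" .
  qed
  also have "\<dots> = (\<integral>\<^sup>+u. ennreal (t / s * s * exp (- s * u)) * indicator {a..} u \<partial>lborel)"
    using assms(1) by simp
  also have "\<dots> = ennreal (t / s * exp (- s * a))"
    using assms(1) t by (intro nn_integral_exp_neg_atLeast) auto
  finally have "(\<integral>x. indicator {a..} x * exp (- t * x) \<partial>M) \<le> t / s * exp (- s * a)"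
    using assms(1) t by (simp add: ennreal_le_iff)
  then show ?thesis
    by (simp add: t_def exp_minus field_simps)
qed

end

context
  fixes V :: "real \<Rightarrow> real"
  assumes V: "Vclass V"
begin

lemma V_mono: "0 < x \<Longrightarrow> x \<le> y \<Longrightarrow> V x \<le> V y"
  using V unfolding Vclass_def mono_on_def by auto

lemma V_tendsto_0: "(V \<longlongrightarrow> 0) (at_right 0)"
  using V unfolding Vclass_def by auto

lemma V_nonneg: "0 < x \<Longrightarrow> 0 \<le> V x"
  by (rule tendsto_upperbound[OF V_tendsto_0])
     (auto simp: eventually_at_right_field intro!: exI[of _ x] V_mono)

lemma Vext_mono: "x \<le> y \<Longrightarrow> Vext V x \<le> Vext V y"
  unfolding Vext_def using V_mono V_nonneg by auto

lemma Vext_continuous_at_right: "continuous (at_right a) (Vext V)"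
proof (cases "a < 0")
  case True
  have "\<forall>\<^sub>F y in at_right a. Vext V y = 0"
    using True by (auto simp: eventually_at_right_field Vext_def intro!: exI[of _ 0])
  then show ?thesis
    using True by (simp add: continuous_within tendsto_eventually Vext_def)
next
  case False
  have "(V \<longlongrightarrow> Vext V a) (at_right a)"
    using False V_tendsto_0 V by (cases "a = 0") (auto simp: Vext_def Vclass_def continuous_within)
  moreover have "\<forall>\<^sub>F y in at_right a. V y = Vext V y"
    using False by (auto simp: eventually_at_right_field Vext_def intro!: exI[of _ "a + 1"])
  ultimately show ?thesis
    by (simp add: continuous_within tendsto_cong)
qed

lemma Vext_tendsto_at_bot: "(Vext V \<longlongrightarrow> 0) at_bot"
  by (rule tendsto_eventually) (auto simp: eventually_at_bot_linorder Vext_def intro!: exI[of _ 0])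

abbreviation dV :: "real measure" where
  "dV \<equiv> interval_measure (Vext V)"

lemma finite_borel_measure_dV: "finite_borel_measure dV"
proof -
  obtain L where L: "(V \<longlongrightarrow> L) at_top"
    using V unfolding Vclass_def by auto
  have "\<forall>\<^sub>F y in at_top. V y = Vext V y"
    by (auto simp: eventually_at_top_linorder Vext_def intro!: exI[of _ 1])
  with L have "(Vext V \<longlongrightarrow> L) at_top"
    by (simp add: tendsto_cong)
  moreover have "0 \<le> L"
    by (rule tendsto_lowerbound[OF L])
       (auto simp: eventually_at_top_linorder intro!: exI[of _ 1] V_nonneg)
  ultimately show ?thesis
    by (intro finite_borel_measure_interval_measure Vext_mono Vext_continuous_at_right
        Vext_tendsto_at_bot)
qed

interpretation dV: finite_borel_measure dV
  by (rule finite_borel_measure_dV)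

lemma cdf_dV: "cdf dV = Vext V"
  by (intro cdf_interval_measure Vext_mono Vext_continuous_at_right Vext_tendsto_at_bot)

lemma LV_eq_integral: "LV V t = (\<integral>x. indicator {0<..} x * exp (- t * x) \<partial>dV)"
  unfolding LV_def set_lebesgue_integral_def by simp

lemma LV_antimono:
  assumes "0 \<le> t" "t \<le> t'"
  shows "LV V t' \<le> LV V t"
  unfolding LV_eq_integral
proof (rule integral_mono)
  show "integrable dV (\<lambda>x. indicator {0<..} x * exp (- t' * x))"
    using assms by (intro dV.integrable_indicator_exp_neg[where a = 0]) auto
  show "integrable dV (\<lambda>x. indicator {0<..} x * exp (- t * x))"
    using assms by (intro dV.integrable_indicator_exp_neg[where a = 0]) auto
  show "indicator {0<..} x * exp (- t' * x) \<le> indicator {0<..} x * exp (- t * x)" for x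
    using assms by (auto simp: indicator_def mult_right_mono)
qed

lemma LV_0_le_measure_space: "LV V 0 \<le> measure dV (space dV)"
  using dV.bounded_measure[of "{0<..}"] by (simp add: LV_eq_integral)

lemma exp_mult_V_le_LV:
  assumes "0 < l" "0 \<le> t"
  shows "exp (- t * l) * V l \<le> LV V t"
proof -
  have "exp (- t * l) * V l = (\<integral>x. exp (- t * l) * indicator {0<..l} x \<partial>dV)"
    using dV.cdf_diff_eq[OF assms(1)] assms(1) by (simp add: cdf_dV Vext_def)
  also have "\<dots> \<le> LV V t"
    unfolding LV_eq_integral
  proof (rule integral_mono)
    show "integrable dV (\<lambda>x. exp (- t * l) * indicator {0<..l} x)"
      by (intro integrable_mult_right integrable_real_indicator) (auto simp: less_top[symmetric])
    show "integrable dV (\<lambda>x. indicator {0<..} x * exp (- t * x))"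
      using assms by (intro dV.integrable_indicator_exp_neg[where a = 0]) auto
    show "exp (- t * l) * indicator {0<..l} x \<le> indicator {0<..} x * exp (- t * x)" for x
      using assms by (auto simp: indicator_def mult_left_mono)
  qed
  finally show ?thesis .
qed

lemma continuous_on_LV: "continuous_on {0..} (LV V)"
proof (rule continuous_on_sequentiallyI)
  fix u :: "nat \<Rightarrow> real" and t
  assume u: "\<forall>n. u n \<in> {0..}" "u \<longlonglongrightarrow> t"
  show "(\<lambda>n. LV V (u n)) \<longlonglongrightarrow> LV V t"
    unfolding LV_eq_integral
  proof (rule integral_dominated_convergence[where w = "indicator {0<..}"])
    show "integrable dV (indicator {0<..} :: real \<Rightarrow> real)"
      by (intro integrable_real_indicator) (auto simp: less_top[symmetric])
    show "AE x in dV. (\<lambda>n. indicator {0<..} x * exp (- u n * x))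
        \<longlonglongrightarrow> indicator {0<..} x * exp (- t * x)"
      using u(2) by (intro AE_I2 tendsto_intros)
    show "AE x in dV. norm (indicator {0<..} x * exp (- u n * x)) \<le> (indicator {0<..} x :: real)" for n
      using u(1) by (intro AE_I2) (auto simp: indicator_def)
  qed measurable
qed

lemma LV_tendsto_0: "(LV V \<longlongrightarrow> 0) at_top"
proof -
  have "((\<lambda>t. \<integral>x. indicator {0<..} x * exp (- t * x) \<partial>dV) \<longlongrightarrow> (\<integral>x. 0 \<partial>dV)) at_top"
  proof (rule integral_dominated_convergence_at_top[where w = "indicator {0<..}"])
    show "integrable dV (indicator {0<..} :: real \<Rightarrow> real)"
      by (intro integrable_real_indicator) (auto simp: less_top[symmetric])
    show "AE x in dV. ((\<lambda>t. indicator {0<..} x * exp (- t * x)) \<longlongrightarrow> 0) at_top"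
    proof (intro AE_I2)
      fix x :: real
      show "((\<lambda>t. indicator {0<..} x * exp (- t * x)) \<longlongrightarrow> 0) at_top"
      proof (cases "0 < x")
        case True
        then have "((\<lambda>t. exp (- t * x)) \<longlongrightarrow> 0) at_top"
          by real_asymp
        then show ?thesis
          using True by simp
      qed simp
    qed
    show "\<forall>\<^sub>F t in at_top. AE x in dV. norm (indicator {0<..} x * exp (- t * x)) \<le> (indicator {0<..} x :: real)"
      by (auto simp: eventually_at_top_linorder indicator_def intro!: exI[of _ 0] AE_I2)
  qed measurable
  then show ?thesis
    unfolding LV_eq_integral[abs_def] by simp
qed

lemma V_le_measure_space: "0 < x \<Longrightarrow> V x \<le> measure dV (space dV)"
  using dV.cdf_bounded[of x] by (simp add: cdf_dV Vext_def)

lemma ex_V_gt: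
  assumes "c < LV V 0"
  shows "\<exists>x>0. c < V x"
proof -
  have "\<forall>\<^sub>F x in at_top. c < Vext V x"
    using order_tendstoD(1)[OF dV.cdf_lim_at_top] LV_0_le_measure_space assms
    by (simp add: cdf_dV)
  then obtain N where "\<And>x. N \<le> x \<Longrightarrow> c < Vext V x"
    by (auto simp: eventually_at_top_linorder)
  then have "c < Vext V (max N 1)"
    by simp
  then show ?thesis
    by (intro exI[of _ "max N 1"]) (simp add: Vext_def)
qed

lemma lamV_mono:
  assumes "c1 \<le> c2" "c2 < LV V 0"
  shows "lamV V c1 \<le> lamV V c2"
  unfolding lamV_def using ex_V_gt[OF assms(2)] assms(1)
  by (intro cInf_superset_mono bdd_belowI[of _ 0]) auto

context
  fixes c :: real
  assumes c: "0 < c" "c < LV V 0"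
begin

lemma lamV_pos: "0 < lamV V c"
proof -
  obtain d where d: "0 < d" "\<And>x. 0 < x \<Longrightarrow> x < d \<Longrightarrow> V x < c"
    using order_tendstoD(2)[OF V_tendsto_0 c(1)] by (auto simp: eventually_at_right_field)
  have "d \<le> lamV V c"
    unfolding lamV_def using ex_V_gt[OF c(2)] d by (intro cInf_greatest) force+
  with d show ?thesis
    by simp
qed

lemma Vext_le_below_lamV:
  assumes "x < lamV V c"
  shows "Vext V x \<le> c"
proof (rule ccontr)
  assume "\<not> Vext V x \<le> c"
  then have "x \<in> {x. 0 < x \<and> c < V x}"
    using c by (auto simp: Vext_def split: if_splits)
  then have "lamV V c \<le> x"
    unfolding lamV_def by (rule cInf_lower) (auto intro: bdd_belowI[of _ 0])
  with assms show False
    by simp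
qed

lemma V_gt_above_lamV:
  assumes "lamV V c < x"
  shows "c < V x"
proof -
  have "bdd_below {x. 0 < x \<and> c < V x}"
    by (auto intro: bdd_belowI[of _ 0])
  then obtain y where "0 < y" "c < V y" "y < x"
    using assms ex_V_gt[OF c(2)] unfolding lamV_def by (auto simp: cInf_less_iff)
  then show ?thesis
    using V_mono[of y x] by simp
qed

lemma V_lamV_ge: "c \<le> V (lamV V c)"
proof (rule tendsto_lowerbound)
  show "(V \<longlongrightarrow> V (lamV V c)) (at_right (lamV V c))"
    using V lamV_pos by (simp add: Vclass_def continuous_within)
  show "\<forall>\<^sub>F x in at_right (lamV V c). c \<le> V x"
    using eventually_at_right_less by eventually_elim (auto intro: less_imp_le V_gt_above_lamV)
qed simp

lemma measure_below_lamV: "measure dV {..<lamV V c} \<le> c"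
  by (rule dV.measure_lessThan_le)
     (auto simp: cdf_dV eventually_at_left_field intro!: exI[of _ "lamV V c - 1"] Vext_le_below_lamV)

lemma integral_below_lamV_le:
  assumes "A \<in> sets borel" "A \<subseteq> {a..<lamV V c}" "0 \<le> t"
  shows "(\<integral>x. indicator A x * exp (- t * x) \<partial>dV) \<le> c * exp (- t * a)"
proof -
  have "(\<integral>x. indicator A x * exp (- t * x) \<partial>dV) \<le> exp (- t * a) * measure dV A"
    using assms by (intro dV.integral_indicator_exp_neg_le) auto
  also have "\<dots> \<le> exp (- t * a) * measure dV {..<lamV V c}"
    using assms(1,2) by (intro mult_left_mono dV.finite_measure_mono) auto
  also have "\<dots> \<le> exp (- t * a) * c"
    using measure_below_lamV by simp
  finally show ?thesis
    by (simp add: mult.commute)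
qed

lemma ln_1_plus_V_le: "0 < x \<Longrightarrow> ln (1 + V x) \<le> ln (1 + measure dV (space dV))"
  using V_le_measure_space[of x] V_nonneg[of x] by simp

lemma bdd_above_tauV: "bdd_above ((\<lambda>x. ln (1 + V x) / x) ` {x. 0 < x \<and> lamV V c \<le> x})"
proof (rule bdd_aboveI2)
  fix x assume x: "x \<in> {x. 0 < x \<and> lamV V c \<le> x}"
  then have "ln (1 + V x) \<le> ln (1 + measure dV (space dV))"
    by (intro ln_1_plus_V_le) simp
  also have "\<dots> / x \<le> ln (1 + measure dV (space dV)) / lamV V c"
    using x lamV_pos by (intro divide_left_mono) auto
  finally show "ln (1 + V x) / x \<le> ln (1 + measure dV (space dV)) / lamV V c"
    using x by (simp add: divide_right_mono)
qed

lemma ln_V_div_le_tauV: "lamV V c \<le> x \<Longrightarrow> ln (1 + V x) / x \<le> tauV V c"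
  unfolding tauV_def using lamV_pos by (intro cSUP_upper bdd_above_tauV) auto

lemma tauV_pos: "0 < tauV V c"
proof -
  have "0 < ln (1 + V (lamV V c)) / lamV V c"
    using V_lamV_ge lamV_pos c(1) by simp
  also have "\<dots> \<le> tauV V c"
    by (rule ln_V_div_le_tauV) simp
  finally show ?thesis .
qed

lemma V_le_exp_tauV:
  assumes "lamV V c \<le> x"
  shows "V x \<le> exp (tauV V c * x)"
proof -
  have x: "0 < x"
    using assms lamV_pos by simp
  then have "ln (1 + V x) \<le> tauV V c * x"
    using ln_V_div_le_tauV[OF assms] by (simp add: divide_le_eq mult.commute)
  then have "exp (ln (1 + V x)) \<le> exp (tauV V c * x)"
    by simp
  then have "1 + V x \<le> exp (tauV V c * x)"
    using V_nonneg[OF x] by simp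
  then show ?thesis
    by simp
qed

lemma exp_gap_le_LV_tauV:
  assumes "lamV V c \<le> x"
  shows "exp (- (tauV V c - ln (1 + V x) / x) * x) * (c / (1 + c)) \<le> LV V (tauV V c)"
proof -
  have x: "0 < x" "c \<le> V x"
    using assms lamV_pos V_lamV_ge V_mono[of "lamV V c" x] by auto
  have "exp (- (tauV V c - ln (1 + V x) / x) * x) = exp (- tauV V c * x) * exp (ln (1 + V x))"
    using x(1) by (simp add: exp_add[symmetric] algebra_simps)
  also have "\<dots> = exp (- tauV V c * x) * (1 + V x)"
    using V_nonneg[OF x(1)] by simp
  finally have exp_gap: "exp (- (tauV V c - ln (1 + V x) / x) * x) = exp (- tauV V c * x) * (1 + V x)" .
  have "c / (1 + c) \<le> V x / (1 + V x)"
    using x c(1) by (simp add: field_simps)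
  then have "exp (- (tauV V c - ln (1 + V x) / x) * x) * (c / (1 + c))
      \<le> exp (- tauV V c * x) * (1 + V x) * (V x / (1 + V x))"
    unfolding exp_gap using V_nonneg[OF x(1)] by (intro mult_left_mono) auto
  also have "\<dots> = exp (- tauV V c * x) * V x"
    using V_nonneg[OF x(1)] by simp
  also have "\<dots> \<le> LV V (tauV V c)"
    using x(1) tauV_pos by (intro exp_mult_V_le_LV) auto
  finally show ?thesis .
qed

text \<open>The points x where ln (1 + V x) / x is close to tauV V c stay bounded, because V is.\<close>
lemma LV_tauV_ge: "c / (1 + c) \<le> LV V (tauV V c)"
proof -
  define \<tau> where "\<tau> = tauV V c"
  define B where "B = 2 * ln (1 + measure dV (space dV)) / \<tau>"
  have \<tau>: "0 < \<tau>"
    using tauV_pos by (simp add: \<tau>_def)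
  have "\<forall>\<^sub>F \<eta> in at_right 0. exp (- \<eta> * B) * (c / (1 + c)) \<le> LV V \<tau>"
    unfolding eventually_at_right_field
  proof (intro exI[of _ "\<tau> / 2"] conjI allI impI)
    fix \<eta> :: real assume \<eta>: "0 < \<eta>" "\<eta> < \<tau> / 2"
    then obtain x where x: "0 < x" "lamV V c \<le> x" and gap: "\<tau> - \<eta> < ln (1 + V x) / x"
      using less_cSUP_iff[OF _ bdd_above_tauV, of "\<tau> - \<eta>"] lamV_pos by (auto simp: \<tau>_def tauV_def)
    have "\<tau> / 2 < ln (1 + V x) / x"
      using gap \<eta> by linarith
    also have "\<dots> \<le> ln (1 + measure dV (space dV)) / x"
      using ln_1_plus_V_le[OF x(1)] x(1) by (simp add: divide_right_mono)
    finally have "x < B"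
      using x(1) \<tau> by (simp add: B_def field_simps)
    then have "(\<tau> - ln (1 + V x) / x) * x \<le> \<eta> * B"
      using gap x(1) \<eta>(1) by (intro mult_mono) auto
    then have "- \<eta> * B \<le> - (\<tau> - ln (1 + V x) / x) * x"
      by linarith
    then have "exp (- \<eta> * B) * (c / (1 + c)) \<le> exp (- (\<tau> - ln (1 + V x) / x) * x) * (c / (1 + c))"
      using c(1) by (intro mult_right_mono) auto
    also have "\<dots> \<le> LV V \<tau>"
      unfolding \<tau>_def by (rule exp_gap_le_LV_tauV[OF x(2)])
    finally show "exp (- \<eta> * B) * (c / (1 + c)) \<le> LV V \<tau>" .
  qed (use \<tau> in simp)
  moreover have "((\<lambda>\<eta>. exp (- \<eta> * B) * (c / (1 + c))) \<longlongrightarrow> c / (1 + c)) (at_right 0)"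
    using c(1) by (auto intro!: tendsto_eq_intros)
  ultimately show ?thesis
    unfolding \<tau>_def by (intro tendsto_upperbound) auto
qed

lemma LV_le_plus_tail:
  assumes "0 \<le> t"
  shows "LV V t \<le> c + (\<integral>x. indicator {lamV V c..} x * exp (- t * x) \<partial>dV)"
proof -
  have split: "{0<..} = {0<..<lamV V c} \<union> {lamV V c..}"
    using lamV_pos by auto
  have "(\<integral>x. indicator {0<..<lamV V c} x * exp (- t * x) \<partial>dV) \<le> c * exp (- t * 0)"
    using assms by (intro integral_below_lamV_le) auto
  then show ?thesis
    unfolding LV_eq_integral split using assms lamV_pos
    by (subst dV.integral_indicator_exp_neg_Un[where a = 0]) auto
qed

lemma LV_tauV_shift_le:
  assumes "0 < s"
  shows "LV V (tauV V c + s) \<le> c + (tauV V c + s) / (s * exp (s * lamV V c))"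
proof -
  have "cdf dV x \<le> exp (tauV V c * x)" if "lamV V c \<le> x" for x
    using that lamV_pos V_le_exp_tauV by (simp add: cdf_dV Vext_def)
  then have "(\<integral>x. indicator {lamV V c..} x * exp (- (tauV V c + s) * x) \<partial>dV)
      \<le> (tauV V c + s) / (s * exp (s * lamV V c))"
    using assms tauV_pos by (intro dV.integral_exp_tail_le) auto
  then show ?thesis
    using LV_le_plus_tail[of "tauV V c + s"] assms tauV_pos by simp
qed

end

lemma TV_least:
  assumes "0 < \<epsilon>"
  shows "0 \<le> TV V \<epsilon>" "LV V (TV V \<epsilon>) \<le> \<epsilon>"
    and "\<And>t. 0 \<le> t \<Longrightarrow> LV V t \<le> \<epsilon> \<Longrightarrow> TV V \<epsilon> \<le> t"
proof -
  define P where "P = {0..} \<inter> LV V -` {..\<epsilon>}"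
  obtain N where "\<And>t. N \<le> t \<Longrightarrow> LV V t < \<epsilon>"
    using order_tendstoD(2)[OF LV_tendsto_0 assms] by (auto simp: eventually_at_top_linorder)
  then have "max N 0 \<in> P"
    by (auto simp: P_def less_imp_le)
  moreover have "closed P"
    unfolding P_def by (intro continuous_closed_preimage continuous_on_LV) auto
  moreover have "bdd_below P"
    by (auto simp: P_def intro: bdd_belowI[of _ 0])
  ultimately have "Inf P \<in> P"
    by (intro closed_contains_Inf) auto
  moreover have "TV V \<epsilon> = Inf P"
    unfolding TV_def using \<open>Inf P \<in> P\<close> \<open>bdd_below P\<close>
    by (intro Least_equality) (auto simp: P_def intro: cInf_lower)
  ultimately show "0 \<le> TV V \<epsilon>" "LV V (TV V \<epsilon>) \<le> \<epsilon>"
    and "\<And>t. 0 \<le> t \<Longrightarrow> LV V t \<le> \<epsilon> \<Longrightarrow> TV V \<epsilon> \<le> t"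
    using \<open>bdd_below P\<close> by (auto simp: P_def intro: cInf_lower)
qed

lemma LV_TV:
  assumes "0 < \<epsilon>" "\<epsilon> < LV V 0"
  shows "LV V (TV V \<epsilon>) = \<epsilon>"
proof -
  obtain t where t: "0 \<le> t" "t \<le> TV V \<epsilon>" "LV V t = \<epsilon>"
    using IVT2'[of "LV V" "TV V \<epsilon>" \<epsilon> 0] TV_least[OF assms(1)] assms(2)
      continuous_on_subset[OF continuous_on_LV]
    by fastforce
  then have "TV V \<epsilon> \<le> t"
    by (intro TV_least(3)[OF assms(1)]) auto
  with t show ?thesis
    by simp
qed

lemma integral_tail_shift_le_LV:
  assumes "0 < a" "0 \<le> r" "0 \<le> t"
  shows "(\<integral>x. indicator {a..} x * exp (- (t + r) * x) \<partial>dV) \<le> exp (- r * a) * LV V t"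
proof -
  have "(\<integral>x. indicator {a..} x * exp (- (t + r) * x) \<partial>dV)
      \<le> (\<integral>x. exp (- r * a) * (indicator {0<..} x * exp (- t * x)) \<partial>dV)"
  proof (rule integral_mono)
    show "integrable dV (\<lambda>x. indicator {a..} x * exp (- (t + r) * x))"
      using assms by (intro dV.integrable_indicator_exp_neg) auto
    show "integrable dV (\<lambda>x. exp (- r * a) * (indicator {0<..} x * exp (- t * x)))"
      using assms by (intro integrable_mult_right dV.integrable_indicator_exp_neg[where a = 0]) auto
    show "indicator {a..} x * exp (- (t + r) * x) \<le> exp (- r * a) * (indicator {0<..} x * exp (- t * x))"
      for x
    proof (cases "a \<le> x")
      case True
      then have "exp (- r * x) \<le> exp (- r * a)"
        using assms(2) by (simp add: mult_left_mono)
      then have "exp (- r * x) * exp (- t * x) \<le> exp (- r * a) * exp (- t * x)"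
        by simp
      then show ?thesis
        using True assms(1) by (simp add: exp_add[symmetric] algebra_simps)
    qed simp
  qed
  then show ?thesis
    by (simp add: LV_eq_integral)
qed

lemma LV_TV_shift_le:
  assumes "0 < \<epsilon>" "\<epsilon> < LV V 0" "0 < c1" "c1 < c2" "c2 < LV V 0" "0 \<le> r" "0 < s"
  shows "LV V (TV V \<epsilon> + r + s)
    \<le> c1 + c2 * exp (- (TV V \<epsilon> + r + s) * lamV V c1)
      + \<epsilon> * (TV V \<epsilon> + r + s) / ((TV V \<epsilon> + s) * exp (r * lamV V c2))"
proof -
  define T t l1 l2 where "T = TV V \<epsilon>" and "t = T + r + s" and "l1 = lamV V c1" and "l2 = lamV V c2"
  have "0 \<le> T" "0 < t" "0 < l1" "l1 \<le> l2"
    using TV_least(1)[OF assms(1)] lamV_pos[of c1] lamV_mono[of c1 c2] assms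
    by (auto simp: T_def t_def l1_def l2_def)
  have middle: "(\<integral>x. indicator {l1..<l2} x * exp (- t * x) \<partial>dV) \<le> c2 * exp (- t * l1)"
    using \<open>0 < t\<close> assms by (intro integral_below_lamV_le) (auto simp: l2_def)
  have "(\<integral>x. indicator {l2..} x * exp (- t * x) \<partial>dV) \<le> exp (- r * l2) * LV V (T + s)"
    using integral_tail_shift_le_LV[of l2 r "T + s"] \<open>0 < l1\<close> \<open>l1 \<le> l2\<close> \<open>0 \<le> T\<close> assms
    by (simp add: t_def add.commute add.left_commute)
  also have "\<dots> \<le> exp (- r * l2) * \<epsilon>"
    using LV_antimono[of T "T + s"] LV_TV[OF assms(1,2)] \<open>0 \<le> T\<close> assms(7) by (simp add: T_def)
  also have "\<dots> = (T + s) * \<epsilon> / ((T + s) * exp (r * l2))"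
    using \<open>0 \<le> T\<close> assms(7) by (simp add: exp_minus divide_inverse mult.commute)
  also have "\<dots> \<le> \<epsilon> * t / ((T + s) * exp (r * l2))"
    using \<open>0 \<le> T\<close> assms by (intro divide_right_mono) (auto simp: t_def mult.commute)
  finally have tail: "(\<integral>x. indicator {l2..} x * exp (- t * x) \<partial>dV) \<le> \<epsilon> * t / ((T + s) * exp (r * l2))" .
  have "{l1..} = {l1..<l2} \<union> {l2..}"
    using \<open>l1 \<le> l2\<close> by auto
  then have "(\<integral>x. indicator {l1..} x * exp (- t * x) \<partial>dV)
      = (\<integral>x. indicator {l1..<l2} x * exp (- t * x) \<partial>dV) + (\<integral>x. indicator {l2..} x * exp (- t * x) \<partial>dV)"
    using \<open>0 < t\<close> \<open>l1 \<le> l2\<close> by (simp only:) (rule dV.integral_indicator_exp_neg_Un; auto)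
  then have "LV V t \<le> c1 + ((\<integral>x. indicator {l1..<l2} x * exp (- t * x) \<partial>dV)
      + (\<integral>x. indicator {l2..} x * exp (- t * x) \<partial>dV))"
    using LV_le_plus_tail[of c1 t] \<open>0 < t\<close> assms by (simp add: l1_def)
  then show ?thesis
    using middle tail by (simp add: T_def t_def l1_def l2_def)
qed

end

theorem lemma2p5:
  fixes V :: "real \<Rightarrow> real" and \<epsilon> c c1 c2 :: real
  assumes "Vclass V"
    and "\<epsilon> \<in> {0<..<LV V 0}" and "c \<in> {0<..<LV V 0}"
    and "c1 \<in> {0<..<LV V 0}" and "c2 \<in> {0<..<LV V 0}"
  shows "LV V (tauV V c) \<ge> c / (1 + c)
     \<and> (\<forall>s>0. LV V (tauV V c + s)
           \<le> c + (tauV V c + s) / (s * exp (s * lamV V c)))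
     \<and> LV V (TV V \<epsilon>) = \<epsilon>
     \<and> (\<forall>r\<ge>0. \<forall>s>0. c1 < c2 \<longrightarrow>
          LV V (TV V \<epsilon> + r + s)
           \<le> c1 + c2 * exp (- (TV V \<epsilon> + r + s) * lamV V c1)
              + \<epsilon> * (TV V \<epsilon> + r + s) / ((TV V \<epsilon> + s) * exp (r * lamV V c2)))"
proof -
  have "0 < \<epsilon>" "\<epsilon> < LV V 0" "0 < c" "c < LV V 0" "0 < c1" "c2 < LV V 0"
    using assms(2-5) by auto
  then show ?thesis
    using LV_tauV_ge[OF assms(1)] LV_tauV_shift_le[OF assms(1)] LV_TV[OF assms(1)]
      LV_TV_shift_le[OF assms(1)]
    by blast
qed

end
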